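(* Let $\mu\in\mathbb{R}$, $\alpha>0$, $\lambda_1,\dots,\lambda_n,\lambda^*_1,\dots,\lambda^*_n>0$. Let $X_1,\dots,X_n$ be independent with $X_i\sim\mathrm{Fr\acute{e}}(\mu,\lambda_i,\alpha)$ and $X^*_1,\dots,X^*_n$ independent with $X^*_i\sim\mathrm{Fr\acute{e}}(\mu,\lambda^*_i,\alpha)$. (i) If $\alpha\ge1$ and $\sum_{i=j}^{n}\lambda^*_{(i)}\le\sum_{i=j}^{n}\lambda_{(i)}$ for all $j=1,\dots,n$, then $X_{n:n}\ge_{\rm rh}X^*_{n:n}$. (ii) If $0<\alpha\le1$ and $\sum_{i=1}^{j}\lambda^*_{(i)}\ge\sum_{i=1}^{j}\lambda_{(i)}$ for all $j=1,\dots,n$, then $X_{n:n}\le_{\rm rh}X^*_{n:n}$.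
   Context: $X\sim \mathrm{Fr\acute{e}}(\mu,\lambda,\alpha)$ means distribution function $\exp\{-((x-\mu)/\lambda)^{-\alpha}\}$ for $x>\mu$. $X_{n:n}=\max_i X_i$. $\lambda_{(1)}\le\dots\le\lambda_{(n)}$ are the components in increasing order. $X\le_{\rm rh}Y$ means the reversed hazard rate $F'/F$ of $X$ is pointwise $\le$ that of $Y$. *)

theory Defs
  imports "HOL-Probability.Probability"
begin

definition frechet_cdf :: "real \<Rightarrow> real \<Rightarrow> real \<Rightarrow> real \<Rightarrow> real" where
  "frechet_cdf mu lam alpha x = (if x > mu then exp (- (((x - mu) / lam) powr (- alpha))) else 0)"

definition is_frechet :: "'a measure \<Rightarrow> ('a \<Rightarrow> real) \<Rightarrow> real \<Rightarrow> real \<Rightarrow> real \<Rightarrow> bool" where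
  "is_frechet M X mu lam alpha \<longleftrightarrow> X \<in> borel_measurable M \<and>
     (\<forall>x. measure M {w \<in> space M. X w \<le> x} = frechet_cdf mu lam alpha x)"

definition max_cdf :: "'a measure \<Rightarrow> (nat \<Rightarrow> 'a \<Rightarrow> real) \<Rightarrow> nat \<Rightarrow> real \<Rightarrow> real" where
  "max_cdf M X n x = measure M {w \<in> space M. Max ((\<lambda>i. X i w) ` {1..n}) \<le> x}"

definition rev_hazard :: "(real \<Rightarrow> real) \<Rightarrow> real \<Rightarrow> real" where
  "rev_hazard F x = deriv F x / F x"

definition rh_le :: "(real \<Rightarrow> real) \<Rightarrow> (real \<Rightarrow> real) \<Rightarrow> bool" where
  "rh_le F G \<longleftrightarrow> (\<forall>x. rev_hazard F x \<le> rev_hazard G x)"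

definition ord_stat :: "nat \<Rightarrow> (nat \<Rightarrow> real) \<Rightarrow> nat \<Rightarrow> real" where
  "ord_stat n lam k = sort (map lam [1..<Suc n]) ! (k - 1)"

end

theory Submission imports Defs begin

text \<open>For \<open>x > \<mu>\<close> one has \<open>F(\<mu>,\<lambda>,\<alpha>)(x) = exp (-\<lambda>\<^sup>\<alpha> (x - \<mu>)\<^sup>-\<^sup>\<alpha>)\<close>, so by
  independence the maximum of the \<open>X\<^sub>i\<close> is again Fr\<eacute>chet, with \<open>\<lambda>\<^sup>\<alpha> = \<Sum>\<^sub>i \<lambda>\<^sub>i\<^sup>\<alpha>\<close>,
  and its reversed hazard rate \<open>\<alpha> (\<Sum>\<^sub>i \<lambda>\<^sub>i\<^sup>\<alpha>) (x - \<mu>)\<^sup>-\<^sup>\<alpha>\<^sup>-\<^sup>1\<close> is increasing in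
  \<open>\<Sum>\<^sub>i \<lambda>\<^sub>i\<^sup>\<alpha>\<close>. Both parts thus reduce to comparing \<open>\<Sum>\<^sub>i \<lambda>\<^sub>i\<^sup>\<alpha>\<close> with \<open>\<Sum>\<^sub>i \<lambda>\<^sup>*\<^sub>i\<^sup>\<alpha>\<close>
  under weak majorization, which follows by bounding \<open>a\<^sup>\<alpha> - b\<^sup>\<alpha>\<close> by the tangent
  \<open>\<alpha> b\<^sup>\<alpha>\<^sup>-\<^sup>1 (a - b)\<close> at the sorted components \<open>b = \<lambda>\<^sup>*\<^sub>(\<^sub>k\<^sub>)\<close> and summing by parts: the
  slopes increase with \<open>k\<close> for \<open>\<alpha> \<ge> 1\<close> and decrease for \<open>\<alpha> \<le> 1\<close>.\<close>

lemma max_cdf_indep_vars: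
  assumes "prob_space M" "1 \<le> n" "prob_space.indep_vars M (\<lambda>_. borel) X {1..n}"
  shows "max_cdf M X n x = (\<Prod>i\<in>{1..n}. measure M {w \<in> space M. X i w \<le> x})"
proof -
  interpret prob_space M by fact
  have "{w \<in> space M. Max ((\<lambda>i. X i w) ` {1..n}) \<le> x} = (\<Inter>i\<in>{1..n}. X i -` {..x} \<inter> space M)"
    using \<open>1 \<le> n\<close> by (auto simp: Max_le_iff)
  moreover have "prob (\<Inter>i\<in>{1..n}. X i -` {..x} \<inter> space M) = (\<Prod>i\<in>{1..n}. prob (X i -` {..x} \<inter> space M))"
  proof (rule indep_setsD)
    show "indep_sets (\<lambda>i. {X i -` A \<inter> space M | A. A \<in> sets borel}) {1..n}"
      using assms(3) unfolding indep_vars_def2 by auto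
  qed (use \<open>1 \<le> n\<close> in \<open>auto intro!: exI[where x="{..x}"]\<close>)
  moreover have "X i -` {..x} \<inter> space M = {w \<in> space M. X i w \<le> x}" for i
    by auto
  ultimately show ?thesis
    by (simp add: max_cdf_def)
qed

lemma frechet_cdf_eq_exp:
  assumes "0 < lam" "mu < x"
  shows "frechet_cdf mu lam alpha x = exp (- (lam powr alpha * (x - mu) powr - alpha))"
proof -
  have "((x - mu) / lam) powr - alpha = lam powr alpha * (x - mu) powr - alpha"
    using assms by (simp add: powr_divide powr_minus_divide)
  then show ?thesis
    using assms by (simp add: frechet_cdf_def)
qed

lemma prod_frechet_cdf:
  assumes "finite I" "I \<noteq> {}" "0 < alpha" "\<forall>i\<in>I. 0 < lam i"
  shows "(\<Prod>i\<in>I. frechet_cdf mu (lam i) alpha x)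
       = frechet_cdf mu ((\<Sum>i\<in>I. lam i powr alpha) powr (1 / alpha)) alpha x"
proof (cases "mu < x")
  case True
  define S where "S = (\<Sum>i\<in>I. lam i powr alpha)"
  have "0 < S"
    using assms unfolding S_def by (intro sum_pos) auto
  have "(\<Prod>i\<in>I. frechet_cdf mu (lam i) alpha x) = (\<Prod>i\<in>I. exp (- (lam i powr alpha * (x - mu) powr - alpha)))"
    using assms True by (intro prod.cong) (auto simp: frechet_cdf_eq_exp)
  also have "\<dots> = exp (- (S * (x - mu) powr - alpha))"
    unfolding S_def sum_distrib_right using assms(1) by (simp add: exp_sum flip: sum_negf)
  also have "\<dots> = frechet_cdf mu (S powr (1 / alpha)) alpha x"
    using True \<open>0 < S\<close> \<open>0 < alpha\<close> by (simp add: frechet_cdf_eq_exp powr_powr)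
  finally show ?thesis
    unfolding S_def .
next
  case False
  then show ?thesis
    using assms by (simp add: frechet_cdf_def card_gt_0_iff)
qed

lemma max_cdf_frechet:
  assumes "prob_space M" "1 \<le> n" "0 < alpha" "\<forall>i\<in>{1..n}. 0 < lam i"
    and "prob_space.indep_vars M (\<lambda>_. borel) X {1..n}"
    and "\<forall>i\<in>{1..n}. is_frechet M (X i) mu (lam i) alpha"
  shows "max_cdf M X n = frechet_cdf mu ((\<Sum>i=1..n. lam i powr alpha) powr (1 / alpha)) alpha"
proof
  fix x
  show "max_cdf M X n x = frechet_cdf mu ((\<Sum>i=1..n. lam i powr alpha) powr (1 / alpha)) alpha x"
    using max_cdf_indep_vars[OF assms(1,2,5)] prod_frechet_cdf[of "{1..n}" alpha lam mu x] assms
    by (simp add: is_frechet_def)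
qed

lemma rev_hazard_frechet_cdf:
  assumes "0 < lam"
  shows "rev_hazard (frechet_cdf mu lam alpha) x
       = (if mu < x then alpha * lam powr alpha * (x - mu) powr (- alpha - 1) else 0)"
proof (cases "mu < x")
  case True
  define H where "H = (\<lambda>y. exp (- (lam powr alpha * (y - mu) powr - alpha)))"
  have "((\<lambda>y. (y - mu) powr - alpha) has_real_derivative - alpha * (x - mu) powr (- alpha - 1)) (at x)"
    using has_real_derivative_powr[of "x - mu" "- alpha"] True
    by (auto intro!: derivative_eq_intros DERIV_chain2[of "\<lambda>z. z powr - alpha"])
  from DERIV_fun_exp[OF DERIV_cmult[OF this, of "- (lam powr alpha)"]]
  have "(H has_real_derivative H x * (alpha * lam powr alpha * (x - mu) powr (- alpha - 1))) (at x)"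
    by (simp add: H_def ac_simps)
  then have "(frechet_cdf mu lam alpha has_real_derivative
      H x * (alpha * lam powr alpha * (x - mu) powr (- alpha - 1))) (at x)"
    by (rule has_field_derivative_transform_within_open[where S = "{mu<..}"])
      (use True assms in \<open>auto simp: H_def frechet_cdf_eq_exp\<close>)
  then have "deriv (frechet_cdf mu lam alpha) x = H x * (alpha * lam powr alpha * (x - mu) powr (- alpha - 1))"
    by (rule DERIV_imp_deriv)
  with True assms show ?thesis
    by (simp add: rev_hazard_def H_def frechet_cdf_eq_exp)
next
  case False
  then show ?thesis
    by (simp add: rev_hazard_def frechet_cdf_def)
qed

lemma rh_le_frechet_cdf:
  assumes "0 < alpha" "0 < lam" "lam \<le> lam'"
  shows "rh_le (frechet_cdf mu lam alpha) (frechet_cdf mu lam' alpha)"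
  unfolding rh_le_def
proof
  fix x
  have "lam powr alpha \<le> lam' powr alpha"
    using assms by (simp add: powr_mono2)
  then show "rev_hazard (frechet_cdf mu lam alpha) x \<le> rev_hazard (frechet_cdf mu lam' alpha) x"
    using assms by (simp add: rev_hazard_frechet_cdf mult_right_mono)
qed

lemma powr_ge_tangent_convex:
  fixes a b alpha :: real
  assumes "1 \<le> alpha" "0 < a" "0 < b"
  shows "alpha * b powr (alpha - 1) * (a - b) \<le> a powr alpha - b powr alpha"
proof (rule convex_on_imp_above_tangent[OF powr_convex[OF assms(1)]])
  show "((\<lambda>x. x powr alpha) has_field_derivative alpha * b powr (alpha - 1)) (at b within {0<..})"
    using assms by (auto intro!: has_field_derivative_at_within has_real_derivative_powr)
qed (use assms in \<open>auto simp: interior_open\<close>)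

lemma powr_le_tangent_concave:
  fixes a b alpha :: real
  assumes "0 < alpha" "alpha \<le> 1" "0 < a" "0 < b"
  shows "a powr alpha - b powr alpha \<le> alpha * b powr (alpha - 1) * (a - b)"
proof -
  have "a powr alpha * b powr (1 - alpha) \<le> alpha * a + (1 - alpha) * b"
    using Youngs_inequality_0[of alpha "1 - alpha" a b] assms by simp
  then have "a powr alpha * b powr (1 - alpha) * b powr (alpha - 1)
      \<le> (alpha * a + (1 - alpha) * b) * b powr (alpha - 1)"
    by (simp add: mult_right_mono)
  moreover have "b powr (1 - alpha) * b powr (alpha - 1) = 1"
    using assms by (simp flip: powr_add)
  moreover have "b * b powr (alpha - 1) = b powr alpha"
    using assms by (simp add: powr_mult_base)
  ultimately show ?thesis
    by (simp add: algebra_simps)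
qed
lemma sum_mult_nonneg_if_suffix_sums_nonneg:
  fixes c d :: "nat \<Rightarrow> real"
  assumes "1 \<le> n" and mono: "\<And>i j. 1 \<le> i \<Longrightarrow> i \<le> j \<Longrightarrow> j \<le> n \<Longrightarrow> c i \<le> c j"
    and "0 \<le> c 1" and suffix: "\<And>j. 1 \<le> j \<Longrightarrow> j \<le> n \<Longrightarrow> 0 \<le> (\<Sum>i=j..n. d i)"
  shows "0 \<le> (\<Sum>i=1..n. c i * d i)"
proof -
  have "c m * (\<Sum>i=m..n. d i) \<le> (\<Sum>i=m..n. c i * d i)" if "m \<le> n" "1 \<le> m" for m
    using that
  proof (induction m rule: inc_induct)
    case (step m)
    have "c m * (\<Sum>i=m..n. d i) = c m * d m + c m * (\<Sum>i=Suc m..n. d i)"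
      using step.hyps by (simp add: sum.atLeast_Suc_atMost distrib_left)
    also have "\<dots> \<le> c m * d m + c (Suc m) * (\<Sum>i=Suc m..n. d i)"
      using mono[of m "Suc m"] suffix[of "Suc m"] step by (simp add: mult_right_mono)
    also have "\<dots> \<le> c m * d m + (\<Sum>i=Suc m..n. c i * d i)"
      using step by simp
    also have "\<dots> = (\<Sum>i=m..n. c i * d i)"
      using step.hyps by (simp add: sum.atLeast_Suc_atMost)
    finally show ?case .
  qed simp
  moreover have "0 \<le> c 1 * (\<Sum>i=1..n. d i)"
    using assms by simp
  ultimately show ?thesis
    using \<open>1 \<le> n\<close> by fastforce
qed

lemma sum_mult_nonpos_if_prefix_sums_nonpos:
  fixes c d :: "nat \<Rightarrow> real"
  assumes "1 \<le> n" and antimono: "\<And>i j. 1 \<le> i \<Longrightarrow> i \<le> j \<Longrightarrow> j \<le> n \<Longrightarrow> c j \<le> c i"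
    and "0 \<le> c n" and prefix: "\<And>j. 1 \<le> j \<Longrightarrow> j \<le> n \<Longrightarrow> (\<Sum>i=1..j. d i) \<le> 0"
  shows "(\<Sum>i=1..n. c i * d i) \<le> 0"
proof -
  have "(\<Sum>i=1..m. c i * d i) \<le> c m * (\<Sum>i=1..m. d i)" if "1 \<le> m" "m \<le> n" for m
    using that
  proof (induction m rule: dec_induct)
    case (step m)
    have "(\<Sum>i=1..Suc m. c i * d i) = (\<Sum>i=1..m. c i * d i) + c (Suc m) * d (Suc m)"
      by simp
    also have "\<dots> \<le> c m * (\<Sum>i=1..m. d i) + c (Suc m) * d (Suc m)"
      using step by simp
    also have "\<dots> \<le> c (Suc m) * (\<Sum>i=1..m. d i) + c (Suc m) * d (Suc m)"
      using antimono[of m "Suc m"] prefix[of m] step by (simp add: mult_right_mono_neg)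
    also have "\<dots> = c (Suc m) * (\<Sum>i=1..Suc m. d i)"
      by (simp add: distrib_left)
    finally show ?case .
  qed simp
  moreover have "c n * (\<Sum>i=1..n. d i) \<le> 0"
    using assms by (simp add: mult_nonneg_nonpos)
  ultimately show ?thesis
    using \<open>1 \<le> n\<close> by fastforce
qed

lemma ord_stat_mono:
  assumes "1 \<le> i" "i \<le> j" "j \<le> n"
  shows "ord_stat n lam i \<le> ord_stat n lam j"
  unfolding ord_stat_def
  by (rule sorted_nth_mono) (use assms in auto)

lemma ord_stat_mem:
  assumes "1 \<le> k" "k \<le> n"
  shows "ord_stat n lam k \<in> lam ` {1..n}"
proof -
  have "ord_stat n lam k \<in> set (sort (map lam [1..<Suc n]))"
    unfolding ord_stat_def by (rule nth_mem) (use assms in auto)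
  then show ?thesis by auto
qed

lemma ord_stat_sum:
  fixes f :: "real \<Rightarrow> real"
  shows "(\<Sum>k=1..n. f (ord_stat n lam k)) = (\<Sum>i=1..n. f (lam i))"
proof -
  define xs where "xs = map lam [1..<Suc n]"
  have length_xs: "length xs = n"
    by (simp add: xs_def)
  have "(\<Sum>k=1..n. f (ord_stat n lam k)) = (\<Sum>k<n. f (sort xs ! k))"
    unfolding ord_stat_def xs_def[symmetric]
    by (rule sum.reindex_bij_witness[where i=Suc and j="\<lambda>k. k - 1"]) auto
  also have "\<dots> = sum_list (map f (sort xs))"
    by (simp add: sum_list_sum_nth atLeast0LessThan length_xs)
  also have "\<dots> = sum_list (map f xs)"
    by (metis mset_map mset_sort sum_mset_sum_list)
  also have "\<dots> = (\<Sum>i=1..n. f (lam i))"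
    by (simp add: xs_def interv_sum_list_conv_sum_set_nat atLeastLessThanSuc_atLeastAtMost comp_def del: upt_Suc)
  finally show ?thesis .
qed

lemma ord_stat_pos:
  assumes "\<forall>i\<in>{1..n}. lam i > 0" "1 \<le> k" "k \<le> n"
  shows "ord_stat n lam k > 0"
  using ord_stat_mem[of k n lam] assms by auto

lemma sum_powr_le_if_weak_submajorized:
  assumes "1 \<le> n" "1 \<le> alpha" "\<forall>i\<in>{1..n}. 0 < lam i" "\<forall>i\<in>{1..n}. 0 < lam' i"
    and "\<forall>j\<in>{1..n}. (\<Sum>i=j..n. ord_stat n lam' i) \<le> (\<Sum>i=j..n. ord_stat n lam i)"
  shows "(\<Sum>i=1..n. lam' i powr alpha) \<le> (\<Sum>i=1..n. lam i powr alpha)"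
proof -
  define a where "a k = ord_stat n lam k" for k
  define b where "b k = ord_stat n lam' k" for k
  define c where "c k = alpha * b k powr (alpha - 1)" for k
  have a_pos: "0 < a k" and b_pos: "0 < b k" if "1 \<le> k" "k \<le> n" for k
    using ord_stat_pos that assms(3,4) by (auto simp: a_def b_def)
  have "(\<Sum>k=1..n. c k * (a k - b k)) \<le> (\<Sum>k=1..n. a k powr alpha - b k powr alpha)"
    using powr_ge_tangent_convex[OF \<open>1 \<le> alpha\<close>] a_pos b_pos by (intro sum_mono) (auto simp: c_def)
  moreover have "0 \<le> (\<Sum>k=1..n. c k * (a k - b k))"
  proof (rule sum_mult_nonneg_if_suffix_sums_nonneg[OF \<open>1 \<le> n\<close>])
    fix i j assume ij: "1 \<le> i" "i \<le> j" "j \<le> n"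
    then have "b i powr (alpha - 1) \<le> b j powr (alpha - 1)"
      using b_pos[of i] ord_stat_mono[OF ij] \<open>1 \<le> alpha\<close> by (intro powr_mono2) (auto simp: b_def)
    then show "c i \<le> c j"
      using \<open>1 \<le> alpha\<close> by (simp add: c_def)
  next
    fix j assume "1 \<le> j" "j \<le> n"
    then show "0 \<le> (\<Sum>i=j..n. a i - b i)"
      using assms(5) by (simp add: a_def b_def sum_subtractf)
  qed (use \<open>1 \<le> alpha\<close> in \<open>simp add: c_def\<close>)
  ultimately show ?thesis
    using ord_stat_sum[of "\<lambda>t. t powr alpha" n lam] ord_stat_sum[of "\<lambda>t. t powr alpha" n lam']
    by (simp add: a_def b_def sum_subtractf)
qed

lemma sum_powr_le_if_weak_supermajorized:
  assumes "1 \<le> n" "0 < alpha" "alpha \<le> 1" "\<forall>i\<in>{1..n}. 0 < lam i" "\<forall>i\<in>{1..n}. 0 < lam' i"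
    and "\<forall>j\<in>{1..n}. (\<Sum>i=1..j. ord_stat n lam i) \<le> (\<Sum>i=1..j. ord_stat n lam' i)"
  shows "(\<Sum>i=1..n. lam i powr alpha) \<le> (\<Sum>i=1..n. lam' i powr alpha)"
proof -
  define a where "a k = ord_stat n lam k" for k
  define b where "b k = ord_stat n lam' k" for k
  define c where "c k = alpha * b k powr (alpha - 1)" for k
  have a_pos: "0 < a k" and b_pos: "0 < b k" if "1 \<le> k" "k \<le> n" for k
    using ord_stat_pos that assms(4,5) by (auto simp: a_def b_def)
  have "(\<Sum>k=1..n. a k powr alpha - b k powr alpha) \<le> (\<Sum>k=1..n. c k * (a k - b k))"
    using powr_le_tangent_concave[OF \<open>0 < alpha\<close> \<open>alpha \<le> 1\<close>] a_pos b_pos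
    by (intro sum_mono) (auto simp: c_def)
  moreover have "(\<Sum>k=1..n. c k * (a k - b k)) \<le> 0"
  proof (rule sum_mult_nonpos_if_prefix_sums_nonpos[OF \<open>1 \<le> n\<close>])
    fix i j assume ij: "1 \<le> i" "i \<le> j" "j \<le> n"
    then have "b j powr (alpha - 1) \<le> b i powr (alpha - 1)"
      using b_pos[of i] ord_stat_mono[OF ij] \<open>alpha \<le> 1\<close> by (intro powr_mono2') (auto simp: b_def)
    then show "c j \<le> c i"
      using \<open>0 < alpha\<close> by (simp add: c_def)
  next
    fix j assume "1 \<le> j" "j \<le> n"
    then show "(\<Sum>i=1..j. a i - b i) \<le> 0"
      using assms(6) by (simp add: a_def b_def sum_subtractf)
  qed (use \<open>0 < alpha\<close> in \<open>simp add: c_def\<close>)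
  ultimately show ?thesis
    using ord_stat_sum[of "\<lambda>t. t powr alpha" n lam] ord_stat_sum[of "\<lambda>t. t powr alpha" n lam']
    by (simp add: a_def b_def sum_subtractf)
qed

theorem mainTheorem10:
  fixes M :: "'a measure" and M' :: "'b measure"
    and X :: "nat \<Rightarrow> 'a \<Rightarrow> real" and X' :: "nat \<Rightarrow> 'b \<Rightarrow> real"
    and lam lam' :: "nat \<Rightarrow> real" and mu alpha :: real and n :: nat
  assumes "prob_space M" and "prob_space M'"
    and "n \<ge> 1" and "alpha > 0"
    and "\<forall>i\<in>{1..n}. lam i > 0" and "\<forall>i\<in>{1..n}. lam' i > 0"
    and "prob_space.indep_vars M (\<lambda>_. borel) X {1..n}"
    and "prob_space.indep_vars M' (\<lambda>_. borel) X' {1..n}"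
    and "\<forall>i\<in>{1..n}. is_frechet M (X i) mu (lam i) alpha"
    and "\<forall>i\<in>{1..n}. is_frechet M' (X' i) mu (lam' i) alpha"
  shows "(alpha \<ge> 1 \<and>
          (\<forall>j\<in>{1..n}. (\<Sum>i=j..n. ord_stat n lam' i) \<le> (\<Sum>i=j..n. ord_stat n lam i))
          \<longrightarrow> rh_le (max_cdf M' X' n) (max_cdf M X n))
       \<and> (alpha \<le> 1 \<and>
          (\<forall>j\<in>{1..n}. (\<Sum>i=1..j. ord_stat n lam' i) \<ge> (\<Sum>i=1..j. ord_stat n lam i))
          \<longrightarrow> rh_le (max_cdf M X n) (max_cdf M' X' n))"
proof -
  define S where "S = (\<Sum>i=1..n. lam i powr alpha)"
  define S' where "S' = (\<Sum>i=1..n. lam' i powr alpha)"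
  have S_pos: "0 < S" and S'_pos: "0 < S'"
    using assms(3,5,6) unfolding S_def S'_def by (auto intro!: sum_pos)
  have F: "max_cdf M X n = frechet_cdf mu (S powr (1 / alpha)) alpha"
    unfolding S_def using max_cdf_frechet assms by blast
  have F': "max_cdf M' X' n = frechet_cdf mu (S' powr (1 / alpha)) alpha"
    unfolding S'_def using max_cdf_frechet assms by blast
  have rh_le_sum: "rh_le (frechet_cdf mu (T powr (1 / alpha)) alpha) (frechet_cdf mu (T' powr (1 / alpha)) alpha)"
    if "0 < T" "T \<le> T'" for T T'
    using that \<open>0 < alpha\<close> by (intro rh_le_frechet_cdf powr_mono2) auto
  show ?thesis
    unfolding F F'
    using sum_powr_le_if_weak_submajorized[of n alpha lam lam'] sum_powr_le_if_weak_supermajorized[of n alpha lam lam']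
      rh_le_sum S_pos S'_pos assms(3-6) unfolding S_def S'_def by blast
qed

end
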